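(* The function $n \mapsto \mathrm{vol}(L(n))$, for integers $n \geq 5$, is increasing. Here $$\mathrm{vol}(L(n)) = \frac{n}{2}\Big(2\Lambda(\theta_n) + \Lambda(\theta_n + \tfrac{\pi}{n}) + \Lambda(\theta_n - \tfrac{\pi}{n}) - \Lambda(2\theta_n - \tfrac{\pi}{2})\Big),$$ with $$\theta_n = \frac{\pi}{2} - \arccos\Big(\frac{1}{2\cos(\pi/n)}\Big), \qquad \Lambda(z) = -\int_0^z \log|2\sin t|\,dt.$$
   Context: $L(n)$, $n\ge5$, is the $n$-th L\"obell polyhedron, realized as a compact right-angled hyperbolic polyhedron in $\mathbb{H}^3$. Combinatorially it consists of two pentagonal flowers (an $n$-gon surrounded cyclically by $n$ pentagons) glued along their boundaries so that the 1-skeleton is trivalent. The volume formula displayed is Vesnin's known formula for its hyperbolic volume. *)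

theory Defs
  imports "HOL-Analysis.Analysis"
begin

text \<open>Lobachevsky function: Lambda z = - integral from 0 to z of log |2 sin t| dt
  (oriented Lebesgue interval integral; the integrand is Lebesgue integrable near 0).\<close>
definition lobachevsky :: "real \<Rightarrow> real" where
  "lobachevsky z = - (LBINT t=0..z. ln \<bar>2 * sin t\<bar>)"

definition lobell_theta :: "nat \<Rightarrow> real" where
  "lobell_theta n = pi / 2 - arccos (1 / (2 * cos (pi / real n)))"

definition lobell_vol :: "nat \<Rightarrow> real" where
  "lobell_vol n = (let th = lobell_theta n in
     real n / 2 * (2 * lobachevsky th + lobachevsky (th + pi / real n)
       + lobachevsky (th - pi / real n) - lobachevsky (2 * th - pi / 2)))"

end

theory Submission
  imports Defs
begin

(* Put a = pi/n and theta(a) = pi/2 - arccos (1 / (2 cos a)).  Using that the Lobachevsky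
   function Lambda is odd, vol(L(n)) = V(n) for the real function V(x) = x/2 * G(pi/x), where
     G(a) = 2 Lambda(theta) + Lambda(theta + a) + Lambda(theta - a) + Lambda(pi/2 - 2 theta)
   has all four arguments in (0, pi/2) when 0 <= a < pi/4.  We show V'(x) > 0 for real x >= 5.

   1. Analysis of Lambda: the integrand l(t) = ln |2 sin t| is integrable on [0, pi/2]
      (|l(t)| <= 1 + 2 t^(-1/2)), so Lambda is odd, additive and Lambda' = -l on (0, pi/2).
   2. Elementary bounds: Lambda >= 0 on [0, pi/4], Lambda decreases on [pi/6, pi/2], and lower
      bounds at pi/4 and pi/2 give 2 Lambda(pi/4) + Lambda(pi/2) > 0; hence G(a) > 0.
   3. Geometry of theta: 2 sin theta cos a = 1, pi/6 <= theta < pi/4 and a < theta.  The first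
      relation yields 2 l(theta) + l(theta + a) + l(theta - a) = 2 l(pi/2 - 2 theta), so theta'
      cancels from G', leaving G'(a) = l(theta - a) - l(theta + a) <= 0.
   4. Hence V'(x) = G(a)/2 + pi/(2x) (l(theta + a) - l(theta - a)) > 0, and the theorem follows
      from the mean value theorem. *)

section \<open>The integrand of the Lobachevsky function\<close>

definition lob_integrand :: "real \<Rightarrow> real" where
  "lob_integrand t = ln \<bar>2 * sin t\<bar>"

lemma lobachevsky_eq: "lobachevsky z = - (LBINT t=0..z. lob_integrand t)"
  unfolding lobachevsky_def lob_integrand_def by simp

text \<open>A linear lower bound for the sine near 0, controlling the logarithmic singularity.\<close>
lemma sin_ge_half_arg:
  assumes "0 \<le> (t::real)" "t \<le> 1" shows "t/2 \<le> sin t"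
proof (cases "t = 0")
  case False
  then have "0 < t" using assms by simp
  from MVT2[OF this, of sin cos] obtain z where z: "0 < z" "z < t" "sin t - sin 0 = (t - 0) * cos z"
    by (auto intro: DERIV_sin)
  have "cos (pi/3) \<le> cos z"
    using z assms pi_gt3 by (intro cos_monotone_0_pi_le) auto
  then have "1/2 \<le> cos z" by (simp add: cos_60)
  then show ?thesis using z \<open>0 < t\<close> by (simp add: mult_left_mono[of "1/2" "cos z" t])
qed simp

lemma lob_integrand_le_ln2: "lob_integrand t \<le> ln 2"
proof (cases "sin t = 0")
  case False
  then have "0 < \<bar>2 * sin t\<bar>" by simp
  moreover have "\<bar>2 * sin t\<bar> \<le> 2" by (simp add: abs_mult)
  ultimately show ?thesis unfolding lob_integrand_def by (subst ln_le_cancel_iff) auto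
qed (simp add: lob_integrand_def)

lemma lob_integrand_abs_bound:
  assumes "0 < t" "t \<le> pi/2"
  shows "\<bar>lob_integrand t\<bar> \<le> 1 + 2 * t powr (-1/2)"
proof -
  have upper: "lob_integrand t \<le> 1" using lob_integrand_le_ln2[of t] ln_2_less_1 by simp
  have "0 < sin t" using assms by (intro sin_gt_zero) auto
  have lower: "- (2 * t powr (-1/2)) \<le> lob_integrand t"
  proof (cases "t \<le> 1")
    case True
    have "t \<le> 2 * sin t" using sin_ge_half_arg[of t] True assms by simp
    then have "ln t \<le> lob_integrand t" unfolding lob_integrand_def using assms \<open>0 < sin t\<close> by simp
    moreover have "ln (t powr (-1/2)) \<le> t powr (-1/2) - 1"
      using assms by (intro ln_le_minus_one) auto
    then have "- ln t / 2 \<le> t powr (-1/2)" using assms by (simp add: ln_powr)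
    ultimately show ?thesis by simp
  next
    case False
    have "sin 1 \<le> sin t" using False assms by (intro sin_monotone_2pi_le) auto
    moreover have "1/2 \<le> sin (1::real)" using sin_ge_half_arg[of "1::real"] by simp
    ultimately have "0 \<le> lob_integrand t" unfolding lob_integrand_def by simp
    then show ?thesis using powr_ge_zero[of t "-1/2"] by linarith
  qed
  show ?thesis using upper lower by (simp add: abs_le_iff) (smt (verit) powr_ge_zero)
qed

text \<open>The singularity at 0 is integrable, hence \<open>Lambda\<close> is an honest integral on \<open>[0, pi/2]\<close>.\<close>
lemma lob_integrand_integrable: "set_integrable lborel {0..pi/2} lob_integrand"
  unfolding set_integrable_def
proof (rule Bochner_Integration.integrable_bound[OF _ _ AE_I2])
  have "(\<lambda>t. t powr (-1/2::real)) integrable_on {0..pi/2}"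
    by (rule integrable_on_powr_from_0) auto
  hence "(\<lambda>t. t powr (-1/2::real)) absolutely_integrable_on {0..pi/2}"
    by (subst absolutely_integrable_on_iff_nonneg) auto
  hence powr_int: "integrable lborel (\<lambda>x. indicat_real {0..pi/2} x *\<^sub>R (x powr (-1/2::real)))"
    unfolding set_integrable_def by (subst (asm) integrable_completion) measurable
  have const_int: "integrable lborel (\<lambda>x. indicat_real {0..pi/2} x *\<^sub>R (1::real))"
    using borel_integrable_atLeastAtMost'[of 0 "pi/2" "\<lambda>_. 1::real"]
    unfolding set_integrable_def by simp
  show "integrable lborel (\<lambda>x. indicat_real {0..pi/2} x *\<^sub>R (1 + 2 * x powr (-1/2::real)))"
    using Bochner_Integration.integrable_add[OF const_int integrable_mult_right[OF powr_int, of 2]]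
    by (simp add: algebra_simps)
  show "(\<lambda>x. indicat_real {0..pi/2} x *\<^sub>R lob_integrand x) \<in> borel_measurable lborel"
    unfolding lob_integrand_def by measurable
  fix x :: real
  show "norm (indicat_real {0..pi/2} x *\<^sub>R lob_integrand x)
    \<le> norm (indicat_real {0..pi/2} x *\<^sub>R (1 + 2 * x powr (-1/2::real)))"
  proof (cases "x \<in> {0<..pi/2}")
    case True
    then show ?thesis using lob_integrand_abs_bound[of x] by (simp add: indicator_def)
  qed (auto simp: indicator_def lob_integrand_def)
qed

lemma lob_integrand_interval_integrable:
  assumes "0 \<le> a" "a \<le> pi/2" "0 \<le> b" "b \<le> pi/2"
  shows "interval_lebesgue_integrable lborel (ereal a) (ereal b) lob_integrand"
  unfolding interval_lebesgue_integrable_def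
  using assms by (auto intro!: set_integrable_subset[OF lob_integrand_integrable] simp: einterval_iff)

lemma lob_integrand_continuous_on:
  assumes "0 < a" "b < pi" shows "continuous_on {a..b} lob_integrand"
proof -
  have "\<bar>2 * sin x\<bar> \<noteq> 0" if "x \<in> {a..b}" for x
    using that assms sin_gt_zero[of x] by auto
  then show ?thesis unfolding lob_integrand_def by (intro continuous_on_ln continuous_intros) blast
qed

section \<open>Basic properties of the Lobachevsky function\<close>

lemma lobachevsky_split:
  assumes "0 \<le> c" "c \<le> pi/2" "0 \<le> z" "z \<le> pi/2"
  shows "lobachevsky z = lobachevsky c - (LBINT t=c..z. lob_integrand t)"
proof -
  have "min (ereal 0) (min (ereal c) (ereal z)) = ereal 0"
       "max (ereal 0) (max (ereal c) (ereal z)) = ereal (max c z)"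
    using assms by (simp_all add: min_def max_def)
  moreover have "interval_lebesgue_integrable lborel (ereal 0) (ereal (max c z)) lob_integrand"
    using assms by (intro lob_integrand_interval_integrable) (auto simp: max_def)
  ultimately have "interval_lebesgue_integrable lborel
      (min (ereal 0) (min (ereal c) (ereal z))) (max (ereal 0) (max (ereal c) (ereal z))) lob_integrand"
    by simp
  from interval_integral_sum[OF this] show ?thesis
    unfolding lobachevsky_eq by (simp add: zero_ereal_def)
qed

text \<open>The integrand is even, so \<open>Lambda\<close> is odd.\<close>
lemma lobachevsky_odd: "lobachevsky (- w) = - lobachevsky w"
proof -
  have "(LBINT t=0..(-w). lob_integrand t) = (LBINT t=ereal w..0. lob_integrand (- t))"
    by (subst interval_integral_reflect) (simp add: zero_ereal_def)
  also have "\<dots> = (LBINT t=ereal w..0. lob_integrand t)"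
    unfolding lob_integrand_def by (simp add: abs_mult)
  also have "\<dots> = - (LBINT t=0..w. lob_integrand t)"
    by (rule interval_integral_endpoints_reverse)
  finally show ?thesis unfolding lobachevsky_eq by simp
qed

lemma lobachevsky_has_derivative:
  assumes "0 < z" "z < pi/2"
  shows "(lobachevsky has_real_derivative (- lob_integrand z)) (at z)"
proof -
  define a where "a = z/2"
  define b where "b = (z + pi/2)/2"
  have ab: "0 < a" "a < z" "z < b" "b < pi/2" using assms by (auto simp: a_def b_def)
  have "((\<lambda>u. LBINT y=z..u. lob_integrand y) has_vector_derivative (lob_integrand z)) (at z within {a..b})"
    using ab by (intro interval_integral_FTC2 lob_integrand_continuous_on) auto
  then have "((\<lambda>u. LBINT y=z..u. lob_integrand y) has_vector_derivative (lob_integrand z)) (at z within {a<..<b})"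
    by (rule has_vector_derivative_within_subset) auto
  then have "((\<lambda>u. LBINT y=z..u. lob_integrand y) has_vector_derivative (lob_integrand z)) (at z)"
    using ab by (subst (asm) has_vector_derivative_within_open) auto
  then have "((\<lambda>u. lobachevsky z - (LBINT y=z..u. lob_integrand y)) has_real_derivative (- lob_integrand z)) (at z)"
    by (auto intro!: derivative_eq_intros simp: has_real_derivative_iff_has_vector_derivative[symmetric])
  then show ?thesis
  proof (rule has_field_derivative_transform_within_open[where S="{a<..<b}"])
    fix u assume "u \<in> {a<..<b}"
    then show "lobachevsky z - (LBINT y=z..u. lob_integrand y) = lobachevsky u"
      using ab by (subst lobachevsky_split[of z u]) auto
  qed (use ab in auto)
qed

section \<open>Elementary bounds for the Lobachevsky function\<close>

lemma interval_integral_mono: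
  fixes f g :: "real \<Rightarrow> real"
  assumes "a \<le> b" "interval_lebesgue_integrable lborel (ereal a) (ereal b) f"
    "interval_lebesgue_integrable lborel (ereal a) (ereal b) g"
    "\<And>x. a < x \<Longrightarrow> x < b \<Longrightarrow> f x \<le> g x"
  shows "(LBINT x=a..b. f x) \<le> (LBINT x=a..b. g x)"
  using assms
  by (auto simp: interval_lebesgue_integral_le_eq interval_lebesgue_integrable_def einterval_iff
      intro!: set_integral_mono)

lemma interval_integrable_continuous:
  "continuous_on UNIV (g::real \<Rightarrow> real) \<Longrightarrow> interval_lebesgue_integrable lborel (ereal a) (ereal b) g"
  by (intro interval_integrable_isCont) (simp add: continuous_on_eq_continuous_at)

text \<open>Below \<open>pi/6\<close> we have \<open>2 sin t \<le> 1\<close>, so the integrand is nonpositive.\<close>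
lemma lobachevsky_nonneg_pi6:
  assumes "0 \<le> u" "u \<le> pi/6"
  shows "0 \<le> lobachevsky u"
proof -
  have "(LBINT t=ereal 0..ereal u. lob_integrand t) \<le> (LBINT t=ereal 0..ereal u. (\<lambda>_. 0::real) t)"
  proof (rule interval_integral_mono)
    show "interval_lebesgue_integrable lborel (ereal 0) (ereal u) lob_integrand"
      using assms by (intro lob_integrand_interval_integrable) auto
    show "interval_lebesgue_integrable lborel (ereal 0) (ereal u) (\<lambda>_. 0::real)"
      by (intro interval_integrable_continuous) auto
    fix x assume x: "0 < x" "x < u"
    then have "0 < sin x" using assms pi_gt3 by (intro sin_gt_zero) auto
    moreover have "sin x \<le> sin (pi/6)" using x assms by (intro sin_monotone_2pi_le) auto
    ultimately show "lob_integrand x \<le> 0" unfolding lob_integrand_def by (simp add: sin_30)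
  qed (use assms in auto)
  then show ?thesis unfolding lobachevsky_eq by (simp add: zero_ereal_def)
qed

text \<open>Above \<open>pi/6\<close> we have \<open>2 sin t \<ge> 1\<close>, so \<open>Lambda\<close> decreases on \<open>[pi/6, pi/2]\<close>.\<close>
lemma lobachevsky_antimono:
  assumes "pi/6 \<le> u" "u \<le> v" "v \<le> pi/2"
  shows "lobachevsky v \<le> lobachevsky u"
proof -
  have "(LBINT t=ereal u..ereal v. (\<lambda>_. 0::real) t) \<le> (LBINT t=ereal u..ereal v. lob_integrand t)"
  proof (rule interval_integral_mono)
    show "interval_lebesgue_integrable lborel (ereal u) (ereal v) lob_integrand"
      using assms pi_gt_zero by (intro lob_integrand_interval_integrable) linarith+
    show "interval_lebesgue_integrable lborel (ereal u) (ereal v) (\<lambda>_. 0::real)"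
      by (intro interval_integrable_continuous) auto
    fix x assume x: "u < x" "x < v"
    have "sin (pi/6) \<le> sin x" using x assms by (intro sin_monotone_2pi_le) auto
    then show "0 \<le> lob_integrand x" unfolding lob_integrand_def by (simp add: sin_30)
  qed (use assms in auto)
  moreover have "lobachevsky v = lobachevsky u - (LBINT t=u..v. lob_integrand t)"
    using assms pi_gt_zero by (intro lobachevsky_split) linarith+
  ultimately show ?thesis by simp
qed

text \<open>Lower bound at \<open>pi/6\<close>, from \<open>ln (4 sin t) \<le> 4 sin t - 1 \<le> 4 t - 1\<close>.\<close>
lemma lobachevsky_pi6_lower: "(1 + ln 2) * (pi/6) - 2 * (pi/6)^2 \<le> lobachevsky (pi/6)"
proof -
  have "(LBINT t=ereal 0..ereal (pi/6). lob_integrand t)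
      \<le> (LBINT t=ereal 0..ereal (pi/6). (\<lambda>t. 4*t - 1 - ln 2) t)"
  proof (rule interval_integral_mono)
    show "interval_lebesgue_integrable lborel (ereal 0) (ereal (pi/6)) lob_integrand"
      by (intro lob_integrand_interval_integrable) auto
    show "interval_lebesgue_integrable lborel (ereal 0) (ereal (pi/6)) (\<lambda>t. 4*t - 1 - ln 2)"
      by (intro interval_integrable_continuous continuous_intros)
    fix x assume x: "0 < x" "x < pi/6"
    then have "0 < sin x" using pi_gt3 by (intro sin_gt_zero) auto
    have "ln (4 * sin x) = ln 2 + ln (2 * sin x)" using ln_mult[of 2 "2 * sin x"] \<open>0 < sin x\<close> by simp
    then have "lob_integrand x = ln (4 * sin x) - ln 2" unfolding lob_integrand_def using \<open>0 < sin x\<close> by simp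
    also have "\<dots> \<le> (4 * sin x - 1) - ln 2" using \<open>0 < sin x\<close> by (simp add: ln_le_minus_one)
    also have "\<dots> \<le> 4 * x - 1 - ln 2" using sin_x_le_x[of x] x by simp
    finally show "lob_integrand x \<le> 4 * x - 1 - ln 2" .
  qed auto
  also have "(LBINT t=ereal 0..ereal (pi/6). (\<lambda>t. 4*t - 1 - ln 2) t)
      = (\<lambda>t. 2*t^2 - (1 + ln 2) * t) (pi/6) - (\<lambda>t. 2*t^2 - (1 + ln 2) * t) 0"
    by (intro interval_integral_FTC_finite continuous_intros)
       (auto simp: has_real_derivative_iff_has_vector_derivative[symmetric] intro!: derivative_eq_intros)
  finally show ?thesis unfolding lobachevsky_eq by (simp add: zero_ereal_def algebra_simps)
qed

text \<open>Lower bound on \<open>[pi/6, pi/2]\<close>, from \<open>ln (2 sin t) \<le> 2 sin t - 1\<close>.\<close>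
lemma lobachevsky_lower:
  assumes "pi/6 \<le> v" "v \<le> pi/2"
  shows "(1 + ln 2) * (pi/6) - 2 * (pi/6)^2 - (sqrt 3 - 2 * cos v - v + pi/6) \<le> lobachevsky v"
proof -
  have "(LBINT t=ereal (pi/6)..ereal v. lob_integrand t)
      \<le> (LBINT t=ereal (pi/6)..ereal v. (\<lambda>t. 2 * sin t - 1) t)"
  proof (rule interval_integral_mono)
    show "interval_lebesgue_integrable lborel (ereal (pi/6)) (ereal v) lob_integrand"
      using assms by (intro lob_integrand_interval_integrable) auto
    show "interval_lebesgue_integrable lborel (ereal (pi/6)) (ereal v) (\<lambda>t. 2 * sin t - 1)"
      by (intro interval_integrable_continuous continuous_intros)
    fix x assume x: "pi/6 < x" "x < v"
    then have "0 < sin x" using assms pi_gt3 by (intro sin_gt_zero) auto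
    then show "lob_integrand x \<le> 2 * sin x - 1"
      unfolding lob_integrand_def using ln_le_minus_one[of "2 * sin x"] by simp
  qed (use assms in auto)
  also have "(LBINT t=ereal (pi/6)..ereal v. (\<lambda>t. 2 * sin t - 1) t)
      = (\<lambda>t. - 2 * cos t - t) v - (\<lambda>t. - 2 * cos t - t) (pi/6)"
    by (intro interval_integral_FTC_finite continuous_intros)
       (auto simp: has_real_derivative_iff_has_vector_derivative[symmetric] intro!: derivative_eq_intros)
  finally have "(LBINT t=pi/6..v. lob_integrand t) \<le> sqrt 3 - 2 * cos v - v + pi/6"
    by (simp add: cos_30)
  moreover have "lobachevsky v = lobachevsky (pi/6) - (LBINT t=pi/6..v. lob_integrand t)"
    using assms by (intro lobachevsky_split) auto
  ultimately show ?thesis using lobachevsky_pi6_lower by simp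
qed

lemma lobachevsky_pi4_pi2:
  shows "0 \<le> lobachevsky (pi/4)" and "0 < 2 * lobachevsky (pi/4) + lobachevsky (pi/2)"
proof -
  have p1: "31415/10000 \<le> pi" and p2: "pi \<le> 31416/10000" using pi_approx by simp_all
  have pp: "pi * pi \<le> 98697/10000" using mult_mono[OF p2 p2] by simp
  have lp: "2/3 * pi \<le> ln 2 * pi" using ln2_ge_two_thirds by (intro mult_right_mono) auto
  have s3: "sqrt 3 \<le> 17321/10000" by (rule real_le_lsqrt) (auto simp: power2_eq_square)
  have s2: "14142/10000 \<le> sqrt 2" by (rule real_le_rsqrt) (simp add: power2_eq_square)
  define K where "K = (1 + ln 2) * (pi/6) - 2 * (pi/6)^2"
  have K: "K = pi/6 + ln 2 * pi / 6 - pi * pi / 18"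
    unfolding K_def by (simp add: power2_eq_square algebra_simps)
  have pi4: "K - (sqrt 3 - sqrt 2 - pi/12) \<le> lobachevsky (pi/4)"
    using lobachevsky_lower[of "pi/4"] unfolding K_def by (simp add: cos_45)
  have pi2: "K - (sqrt 3 - pi/3) \<le> lobachevsky (pi/2)"
    using lobachevsky_lower[of "pi/2"] unfolding K_def by simp
  show "0 \<le> lobachevsky (pi/4)" using pi4 K p1 p2 pp lp s3 s2 by linarith
  show "0 < 2 * lobachevsky (pi/4) + lobachevsky (pi/2)" using pi4 pi2 K p1 p2 pp lp s3 s2 by linarith
qed

lemma lobachevsky_nonneg:
  assumes "0 \<le> u" "u \<le> pi/4"
  shows "0 \<le> lobachevsky u"
proof (cases "u \<le> pi/6")
  case False
  then show ?thesis
    using assms lobachevsky_antimono[of u "pi/4"] lobachevsky_pi4_pi2(1) by linarith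
qed (use assms lobachevsky_nonneg_pi6 in auto)

section \<open>The angle \<open>theta\<close>\<close>

text \<open>The angle of the Loebell polyhedron as a function of \<open>a = pi/n\<close>; for \<open>0 \<le> a < pi/4\<close>
  it is \<open>arcsin (1 / (2 cos a))\<close>.\<close>
definition lobell_angle :: "real \<Rightarrow> real" where
  "lobell_angle a = pi/2 - arccos (1 / (2 * cos a))"

lemma lobell_theta_eq: "lobell_theta n = lobell_angle (pi / real n)"
  unfolding lobell_theta_def lobell_angle_def ..

lemma lobell_angle_bounds:
  assumes "0 \<le> a" "a < pi/4"
  shows "sin (lobell_angle a) * (2 * cos a) = 1" "pi/6 \<le> lobell_angle a"
    "lobell_angle a < pi/4" "a < lobell_angle a"
proof -
  define c where "c = cos a"
  define y where "y = 1 / (2 * c)"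
  have "cos (pi/4) < c" unfolding c_def using assms by (intro cos_monotone_0_pi) auto
  then have c2: "sqrt 2 / 2 < c" by (simp add: cos_45)
  have s2: "sqrt 2 * sqrt 2 = 2" by simp
  have cpos: "0 < c" using c2 real_sqrt_ge_zero[of 2] by linarith
  have y1: "1/2 \<le> y" using cpos unfolding y_def c_def by (simp add: field_simps)
  have "1 < sqrt 2 * c" using mult_strict_left_mono[OF c2, of "sqrt 2"] s2 by simp
  then have y2: "y < sqrt 2 / 2" unfolding y_def using cpos s2 by (simp add: field_simps)
  have "sqrt 2 < sqrt (4::real)" by (rule real_sqrt_less_mono) simp
  then have r2: "sqrt 2 / 2 < 1" by simp
  have angle: "lobell_angle a = arcsin y"
    unfolding lobell_angle_def y_def c_def using y1 y2 r2
    by (subst arcsin_arccos_eq) (auto simp: y_def c_def)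
  have sin_angle: "sin (lobell_angle a) = y" unfolding angle using y1 y2 r2 by simp
  then show "sin (lobell_angle a) * (2 * cos a) = 1"
    using cpos unfolding y_def c_def by simp
  have "arcsin (sin (pi/6)) \<le> arcsin y" using y1 y2 r2
    by (intro arcsin_le_arcsin) (auto simp: sin_30)
  then show lower: "pi/6 \<le> lobell_angle a" unfolding angle by (subst (asm) arcsin_sin) auto
  have "arcsin y < arcsin (sin (pi/4))" using y1 y2 r2
    by (intro arcsin_less_arcsin) (auto simp: sin_45)
  then show upper: "lobell_angle a < pi/4" unfolding angle by (subst (asm) arcsin_sin) auto
  text \<open>\<open>sin a < y\<close> because \<open>4 c^2 (1 - c^2) < 1\<close>, i.e. \<open>(2 c^2 - 1)^2 > 0\<close>.\<close>
  have "1/2 < c^2" using power_strict_mono[OF c2, of 2] by (simp add: power_divide)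
  then have "4 * c^2 * (1 - c^2) < 1" using power_strict_mono[of 0 "2*c^2 - 1" 2]
    by (simp add: algebra_simps power2_eq_square)
  then have "1 - c^2 < y^2" unfolding y_def using cpos
    by (simp add: power_divide power_mult_distrib field_simps)
  moreover have "sin a = sqrt (1 - c^2)" unfolding c_def
    using assms by (intro sin_cos_sqrt sin_ge_zero) auto
  ultimately have "sin a < sin (lobell_angle a)"
    using real_sqrt_less_mono[of "1 - c^2" "y^2"] y1 sin_angle by simp
  then show "a < lobell_angle a" using assms lower upper
    by (subst (asm) sin_mono_less_eq) auto
qed

text \<open>The angle depends differentiably on \<open>a\<close>.\<close>
lemma lobell_angle_differentiable:
  assumes "0 \<le> a" "a < pi/4"
  shows "\<exists>D. (lobell_angle has_real_derivative D) (at a)"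
proof -
  have "cos (pi/4) < cos a" using assms by (intro cos_monotone_0_pi) auto
  then have "sqrt 2 / 2 < cos a" by (simp add: cos_45)
  moreover have "1 \<le> sqrt (2::real)" by (rule real_le_rsqrt) simp
  ultimately have "1 < 2 * cos a" by linarith
  then have "1 / (2 * cos a) < 1" "-1 < 1 / (2 * cos a)" "cos a \<noteq> 0"
    by (simp_all add: field_simps)
  then show ?thesis unfolding lobell_angle_def[abs_def]
    by (intro exI) (auto intro!: derivative_eq_intros)
qed

text \<open>The trigonometric identity behind the cancellation of \<open>theta'\<close>: if \<open>2 sin t cos a = 1\<close>,
  then \<open>(2 sin t)^2 (2 sin (t + a)) (2 sin (t - a)) = (2 cos 2t)^2\<close>; taking \<open>ln |.|\<close> gives
  a linear relation between values of the integrand.\<close>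
lemma lob_integrand_identity:
  assumes rel: "sin t * (2 * cos a) = 1" and nz: "cos (2 * t) \<noteq> 0"
  shows "2 * lob_integrand t + lob_integrand (t + a) + lob_integrand (t - a)
       = 2 * lob_integrand (pi/2 - 2 * t)"
proof -
  have "sin (t + a) * sin (t - a) = sin t ^ 2 * cos a ^ 2 - cos t ^ 2 * sin a ^ 2"
    by (simp add: sin_add sin_diff power2_eq_square algebra_simps)
  also have "\<dots> = sin t ^ 2 - sin a ^ 2"
    by (simp add: cos_squared_eq algebra_simps)
  finally have diff: "sin (t + a) * sin (t - a) = sin t ^ 2 - (1 - cos a ^ 2)"
    by (simp add: sin_squared_eq)
  have "(sin t * (2 * cos a))^2 = 1" using rel by simp
  then have rel2: "(sin t * cos a)^2 = 1/4" by (simp add: power_mult_distrib)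
  have "(2 * sin t)^2 * ((2 * sin (t + a)) * (2 * sin (t - a)))
      = 16 * sin t ^ 2 * (sin (t + a) * sin (t - a))"
    by (simp add: power2_eq_square)
  also have "\<dots> = 16 * sin t ^ 2 * (sin t ^ 2 - 1) + 16 * (sin t * cos a)^2"
    unfolding diff by (simp add: power2_eq_square algebra_simps)
  also have "\<dots> = (2 * cos (2 * t))^2"
    unfolding rel2 cos_double_sin by (simp add: power2_eq_square algebra_simps)
  finally have prod: "(2 * sin t)^2 * ((2 * sin (t + a)) * (2 * sin (t - a))) = (2 * cos (2 * t))^2" .
  then have nonzero: "sin t \<noteq> 0" "sin (t + a) \<noteq> 0" "sin (t - a) \<noteq> 0"
    using nz by auto
  have "2 * lob_integrand t + lob_integrand (t + a) + lob_integrand (t - a)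
      = ln \<bar>(2 * sin t)^2 * ((2 * sin (t + a)) * (2 * sin (t - a)))\<bar>"
    unfolding lob_integrand_def using nonzero ln_realpow[of 2 4]
    by (simp add: abs_mult ln_mult power2_eq_square)
  also have "\<dots> = 2 * ln \<bar>2 * cos (2 * t)\<bar>"
    unfolding prod power_abs using nz by (subst ln_realpow) auto
  also have "\<dots> = 2 * lob_integrand (pi/2 - 2 * t)"
    unfolding lob_integrand_def by (simp add: sin_cos_eq)
  finally show ?thesis .
qed

section \<open>The volume as a function of a real variable\<close>

text \<open>The bracket of the volume formula, \<open>2 vol / n\<close>, as a function of \<open>a = pi/n\<close> (oddness of
  \<open>Lambda\<close> has been used to write the last term with a positive argument).\<close>
definition lobell_G :: "real \<Rightarrow> real" where
  "lobell_G a = 2 * lobachevsky (lobell_angle a) + lobachevsky (lobell_angle a + a)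
     + lobachevsky (lobell_angle a - a) + lobachevsky (pi/2 - 2 * lobell_angle a)"

definition lobell_vol_real :: "real \<Rightarrow> real" where
  "lobell_vol_real x = x / 2 * lobell_G (pi / x)"

lemma lobell_vol_eq: "lobell_vol n = lobell_vol_real (real n)"
  using lobachevsky_odd[of "pi/2 - 2 * lobell_angle (pi / real n)"]
  unfolding lobell_vol_def lobell_vol_real_def lobell_G_def lobell_theta_eq Let_def by simp

text \<open>Positivity of \<open>G\<close>: the first two terms are bounded by \<open>2 Lambda(pi/4) + Lambda(pi/2) > 0\<close>, the last two are nonnegative.\<close>
lemma lobell_G_pos:
  assumes "0 \<le> a" "a < pi/4"
  shows "0 < lobell_G a"
proof -
  define t where "t = lobell_angle a"
  note angle = lobell_angle_bounds[OF assms, folded t_def]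
  have "lobachevsky (pi/4) \<le> lobachevsky t" using angle by (intro lobachevsky_antimono) auto
  moreover have "lobachevsky (pi/2) \<le> lobachevsky (t + a)"
    using angle assms by (intro lobachevsky_antimono) auto
  moreover have "0 \<le> lobachevsky (t - a)" using angle assms by (intro lobachevsky_nonneg) auto
  moreover have "0 \<le> lobachevsky (pi/2 - 2 * t)" using angle by (intro lobachevsky_nonneg) auto
  ultimately show ?thesis
    unfolding lobell_G_def t_def[symmetric] using lobachevsky_pi4_pi2(2) by linarith
qed

text \<open>Thanks to \<open>lob_integrand_identity\<close> the derivative of the angle drops out.\<close>
lemma lobell_G_has_derivative:
  assumes "0 \<le> a" "a < pi/4"
  defines "t \<equiv> lobell_angle a"
  shows "(lobell_G has_real_derivative lob_integrand (t - a) - lob_integrand (t + a)) (at a)"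
proof -
  note angle = lobell_angle_bounds[OF assms(1,2), folded t_def]
  obtain D where dt: "(lobell_angle has_real_derivative D) (at a)"
    using lobell_angle_differentiable[OF assms(1,2)] by blast
  have dL: "(lobachevsky has_real_derivative - lob_integrand u) (at u)" if "0 < u" "u < pi/2" for u
    using that by (rule lobachevsky_has_derivative)
  have "(lobell_G has_real_derivative
      2 * (- lob_integrand t * D) + (- lob_integrand (t + a) * (D + 1))
      + (- lob_integrand (t - a) * (D - 1)) + (- lob_integrand (pi/2 - 2 * t) * (0 - 2 * D))) (at a)"
    using angle assms unfolding lobell_G_def[abs_def] t_def
    by (intro DERIV_add DERIV_cmult DERIV_chain2[OF dL] DERIV_diff DERIV_ident DERIV_const dt) auto
  moreover have "2 * (- lob_integrand t * D) + (- lob_integrand (t + a) * (D + 1))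
      + (- lob_integrand (t - a) * (D - 1)) + (- lob_integrand (pi/2 - 2 * t) * (0 - 2 * D))
    = - D * (2 * lob_integrand t + lob_integrand (t + a) + lob_integrand (t - a)
             - 2 * lob_integrand (pi/2 - 2 * t))
      + (lob_integrand (t - a) - lob_integrand (t + a))"
    by (simp add: algebra_simps)
  moreover have "cos (2 * t) \<noteq> 0" using angle by (intro cos_gt_zero[THEN less_imp_neq, symmetric]) auto
  ultimately show ?thesis using lob_integrand_identity[OF angle(1)] by simp
qed

lemma lobell_vol_real_has_pos_derivative:
  assumes "5 \<le> x"
  shows "\<exists>y. (lobell_vol_real has_real_derivative y) (at x) \<and> 0 < y"
proof -
  define a where "a = pi / x"
  define t where "t = lobell_angle a"
  have a: "0 < a" "0 \<le> a" "a < pi/4" using assms unfolding a_def by (auto simp: field_simps)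
  note angle = lobell_angle_bounds[OF a(2,3), folded t_def]
  have dG: "(lobell_G has_real_derivative lob_integrand (t - a) - lob_integrand (t + a)) (at a)"
    using lobell_G_has_derivative[OF a(2,3)] unfolding t_def .
  have da: "((\<lambda>x. pi / x) has_real_derivative - pi / x^2) (at x)"
    using assms by (auto intro!: derivative_eq_intros simp: power2_eq_square)
  have "(lobell_vol_real has_real_derivative
      x/2 * ((lob_integrand (t - a) - lob_integrand (t + a)) * (- pi / x^2)) + 1/2 * lobell_G a) (at x)"
    unfolding lobell_vol_real_def[abs_def] a_def
    by (rule DERIV_mult'[OF _ DERIV_chain2[OF dG[unfolded a_def] da]])
       (auto intro!: derivative_eq_intros)
  moreover have "x/2 * ((lob_integrand (t - a) - lob_integrand (t + a)) * (- pi / x^2)) + 1/2 * lobell_G a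
      = 1/2 * lobell_G a + pi / (2 * x) * (lob_integrand (t + a) - lob_integrand (t - a))"
    using assms by (simp add: field_simps power2_eq_square)
  moreover have "lob_integrand (t - a) \<le> lob_integrand (t + a)"
  proof -
    have "0 < sin (t - a)" using angle a by (intro sin_gt_zero) auto
    moreover have "sin (t - a) \<le> sin (t + a)" using angle a by (intro sin_monotone_2pi_le) auto
    ultimately show ?thesis unfolding lob_integrand_def by simp
  qed
  then have "0 < 1/2 * lobell_G a + pi / (2 * x) * (lob_integrand (t + a) - lob_integrand (t - a))"
    using lobell_G_pos[OF a(2,3)] assms by (intro add_pos_nonneg mult_nonneg_nonneg) auto
  ultimately show ?thesis by auto
qed

theorem mainTheorem3:
  shows "strict_mono_on {n::nat. 5 \<le> n} lobell_vol"
proof (rule strict_mono_onI)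
  fix m n :: nat assume mn: "m \<in> {n. 5 \<le> n}" "n \<in> {n. 5 \<le> n}" "m < n"
  have "lobell_vol_real (real m) < lobell_vol_real (real n)"
  proof (rule DERIV_pos_imp_increasing[of _ _ lobell_vol_real])
    fix x assume "real m \<le> x" "x \<le> real n"
    then have "5 \<le> x" using mn by simp
    then show "\<exists>y. (lobell_vol_real has_real_derivative y) (at x) \<and> 0 < y"
      by (rule lobell_vol_real_has_pos_derivative)
  qed (use mn in simp)
  then show "lobell_vol m < lobell_vol n" by (simp add: lobell_vol_eq)
qed

end
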